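(* Let $p$ be a prime, $T=\mathbb{Z}(p^\infty)$ the Prüfer $p$-group, and $A$ a countable unbounded reduced $p$-group. Then $\boldsymbol\Pi^0_3$ is the complexity class of $\{0\}$ in $\mathrm{Hom}(T,E_\omega(A))$.
   Context: $L_\omega(A)=\varprojlim_{n<\omega}A/p^nA$ (the $p$-adic completion, a Polish group), $\kappa:A\to L_\omega(A)$ canonical, $E_\omega(A)=L_\omega(A)/\kappa(A)$, a group with a Polish cover (Polish group modulo a Polishable subgroup, i.e. the image of a continuous homomorphism from a Polish group). For a countable group $T$ and $G=\hat G/N$, $\mathrm{Hom}(T,G)$ is the group of homomorphisms $T\to G$, presented as $\hat H/N_H$: $\hat H$ is the Polish group of maps $\varphi:T\to\hat G$ with $\varphi(0)=0$ and $\varphi(a+b)-\varphi(a)-\varphi(b)\in N$, where $\varphi_i\to\varphi$ iff $(\varphi_i-\varphi)(a)\to0$ in $\hat G$ and $(\varphi_i-\varphi)(a+b)-(\varphi_i-\varphi)(a)-(\varphi_i-\varphi)(b)\to0$ in $N$ (with its Polish topology) for all $a,b$; $N_H=\{\varphi:\varphi(T)\subseteq N\}$. $\boldsymbol\Pi^0_3$ is the complexity class of $\{0\}$ if $N_H$ is $\boldsymbol\Pi^0_3$ but not $\boldsymbol\Sigma^0_3$ in $\hat H$. *)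

theory Defs
  imports "HOL-Analysis.Analysis" "HOL-Library.Countable"
begin

section \<open>Abelian p-groups (type-class idiom; the group A is the whole type 'a)\<close>

definition gmult :: "nat \<Rightarrow> 'a::ab_group_add \<Rightarrow> 'a" where
  "gmult k a = (\<Sum>i<k. a)"

definition is_subgroup :: "'a::ab_group_add set \<Rightarrow> bool" where
  "is_subgroup D \<longleftrightarrow> 0 \<in> D \<and> (\<forall>x\<in>D. \<forall>y\<in>D. x + y \<in> D) \<and> (\<forall>x\<in>D. - x \<in> D)"

definition divisible_set :: "'a::ab_group_add set \<Rightarrow> bool" where
  "divisible_set D \<longleftrightarrow> (\<forall>d\<in>D. \<forall>k>0. \<exists>e\<in>D. gmult k e = d)"

definition reduced_group :: "'a::ab_group_add itself \<Rightarrow> bool" where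
  "reduced_group _ \<longleftrightarrow> (\<forall>D::'a set. is_subgroup D \<and> divisible_set D \<longrightarrow> D = {0})"

definition p_group :: "nat \<Rightarrow> 'a::ab_group_add itself \<Rightarrow> bool" where
  "p_group p _ \<longleftrightarrow> (\<forall>a::'a. \<exists>n. gmult (p ^ n) a = 0)"

definition bounded_group :: "'a::ab_group_add itself \<Rightarrow> bool" where
  "bounded_group _ \<longleftrightarrow> (\<exists>n>0. \<forall>a::'a. gmult n a = 0)"

definition pmultA :: "nat \<Rightarrow> nat \<Rightarrow> 'a::ab_group_add set" where
  "pmultA p n = range (gmult (p ^ n))"

definition pcoset :: "nat \<Rightarrow> nat \<Rightarrow> 'a::ab_group_add \<Rightarrow> 'a set" where
  "pcoset p n a = (\<lambda>b. a + b) ` pmultA p n"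

text \<open>An element of L_omega(A) is a compatible sequence of cosets x n in A/p^n A.\<close>
definition Lomega :: "nat \<Rightarrow> (nat \<Rightarrow> 'a::ab_group_add set) set" where
  "Lomega p = {x. (\<forall>n. \<exists>a. x n = pcoset p n a) \<and> (\<forall>n. x (Suc n) \<subseteq> x n)}"

definition kappa :: "nat \<Rightarrow> 'a::ab_group_add \<Rightarrow> nat \<Rightarrow> 'a set" where
  "kappa p a = (\<lambda>n. pcoset p n a)"

definition Lzero :: "nat \<Rightarrow> nat \<Rightarrow> 'a::ab_group_add set" where
  "Lzero p = kappa p 0"

definition Ldiff :: "(nat \<Rightarrow> 'a::ab_group_add set) \<Rightarrow> (nat \<Rightarrow> 'a set) \<Rightarrow> nat \<Rightarrow> 'a set" where
  "Ldiff x y = (\<lambda>n. {u - v |u v. u \<in> x n \<and> v \<in> y n})"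

text \<open>Inverse-limit topology: subspace of the product of the discrete groups A/p^n A.\<close>
definition Ltop :: "nat \<Rightarrow> (nat \<Rightarrow> 'a::ab_group_add set) topology" where
  "Ltop p = subtopology
     (product_topology (\<lambda>n. discrete_topology (range (pcoset p n))) UNIV) (Lomega p)"

definition prufer :: "nat \<Rightarrow> rat set" where
  "prufer p = {q. 0 \<le> q \<and> q < 1 \<and> (\<exists>n. q * of_nat p ^ n \<in> \<int>)}"

definition padd :: "rat \<Rightarrow> rat \<Rightarrow> rat" where
  "padd a b = frac (a + b)"

section \<open>Hom(T, E_omega(A)) presented as Hhat / N_H\<close>

definition cocyc :: "(rat \<Rightarrow> nat \<Rightarrow> 'a::ab_group_add set) \<Rightarrow> rat \<Rightarrow> rat \<Rightarrow> nat \<Rightarrow> 'a set" where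
  "cocyc \<phi> a b = Ldiff (Ldiff (\<phi> (padd a b)) (\<phi> a)) (\<phi> b)"

definition Hhat :: "nat \<Rightarrow> (rat \<Rightarrow> nat \<Rightarrow> 'a::ab_group_add set) set" where
  "Hhat p = {\<phi>. (\<forall>t\<in>prufer p. \<phi> t \<in> Lomega p) \<and> (\<forall>t. t \<notin> prufer p \<longrightarrow> \<phi> t = Lzero p)
      \<and> \<phi> 0 = Lzero p
      \<and> (\<forall>a\<in>prufer p. \<forall>b\<in>prufer p. cocyc \<phi> a b \<in> range (kappa p))}"

text \<open>Initial topology of the maps phi |-> phi(a) (into L_omega(A)) and
  phi |-> cocycle (into kappa(A) with its Polish, i.e. discrete quotient, topology).\<close>
definition Htop :: "nat \<Rightarrow> (rat \<Rightarrow> nat \<Rightarrow> 'a::ab_group_add set) topology" where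
  "Htop p = topology_generated_by
     ({Hhat p}
      \<union> {{\<phi> \<in> Hhat p. \<phi> a \<in> U} |a U. a \<in> prufer p \<and> openin (Ltop p) U}
      \<union> {{\<phi> \<in> Hhat p. cocyc \<phi> a b \<in> S} |a b S. a \<in> prufer p \<and> b \<in> prufer p \<and> S \<subseteq> range (kappa p)})"

definition NH :: "nat \<Rightarrow> (rat \<Rightarrow> nat \<Rightarrow> 'a::ab_group_add set) set" where
  "NH p = {\<phi> \<in> Hhat p. \<forall>t\<in>prufer p. \<phi> t \<in> range (kappa p)}"

section \<open>Borel hierarchy (finite levels, indexed from 1)\<close>

fun borel_sigma :: "'b topology \<Rightarrow> nat \<Rightarrow> 'b set set" where
  "borel_sigma X 0 = {}"
| "borel_sigma X (Suc 0) = {U. openin X U}"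
| "borel_sigma X (Suc (Suc n)) =
     {\<Union>(range F) |F::nat \<Rightarrow> 'b set. \<forall>i. \<exists>S\<in>borel_sigma X (Suc n). F i = topspace X - S}"

definition borel_pi :: "'b topology \<Rightarrow> nat \<Rightarrow> 'b set set" where
  "borel_pi X n = {topspace X - S |S. S \<in> borel_sigma X n}"

end

(*
  Upper bound: NH is the intersection, over the countably many t in Z(p^oo), of the sets
  {phi. phi t in kappa(A)}, and each of these is the countable union over a in A of the
  closed sets {phi. phi t = kappa a}.

  Lower bound: as A is reduced and unbounded, there are g_k and strictly increasing n_k such
  that p^(n_k) g_k has order p and height exactly n_k. A point x of the Cantor space on N x N
  is sent to the homomorphism Phi x with
    Phi x t = sum over (m, k) in x of (p^(n_k + m + 1) t mod p^(n_k + 1)) g_k,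
  a p-adically convergent sum, and Phi is continuous. If every column of x is finite, Phi x
  lies in NH. At t = p^-(M + 1) the terms of column M are p^(n_k) g_k and all later columns
  vanish, so Phi x t determines column M of x once the earlier columns are fixed; since A is
  countable, for a fixed beginning only countably many M-th columns are compatible with
  Phi x in NH. A Baire category fusion argument shows that a Sigma^0_3 subset of the Cantor
  space containing all points with finite columns has, for some beginning and some M,
  uncountably many compatible M-th columns. Hence the preimage of NH under Phi, and so NH
  itself, is not Sigma^0_3.
*)

theory Submission
  imports Defs
begin

lemma gmult_0_left [simp]: "gmult 0 a = 0"
  by (simp add: gmult_def)

lemma gmult_Suc: "gmult (Suc k) a = a + gmult k a"
  by (simp add: gmult_def)

lemma gmult_0_right [simp]: "gmult k (0::'a::ab_group_add) = 0"
  by (simp add: gmult_def)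

lemma gmult_add_left: "gmult (m + n) a = gmult m a + gmult n a"
  by (induction m) (simp_all add: gmult_Suc add.assoc)

lemma gmult_add_right: "gmult k (a + b) = gmult k a + gmult k (b::'a::ab_group_add)"
  by (induction k) (simp_all add: gmult_Suc algebra_simps)

lemma gmult_minus_right: "gmult k (- a) = - gmult k (a::'a::ab_group_add)"
  by (induction k) (simp_all add: gmult_Suc algebra_simps)

lemma gmult_diff_right: "gmult k (a - b) = gmult k a - gmult k (b::'a::ab_group_add)"
  using gmult_add_right[of k a "- b"] by (simp add: gmult_minus_right)

lemma gmult_mult: "gmult (m * n) a = gmult m (gmult n (a::'a::ab_group_add))"
  by (induction m) (simp_all add: gmult_Suc gmult_add_left gmult_add_right)

lemma gmult_eq_if_mod_eq:
  assumes "gmult q a = (0::'a::ab_group_add)" "i mod q = j mod q"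
  shows "gmult i a = gmult j a"
proof -
  have "gmult i a = gmult (i mod q) a" for i
    using gmult_add_left[of "i mod q" "i div q * q" a] by (simp add: gmult_mult assms(1))
  then show ?thesis using assms(2) by metis
qed

lemma gmult_in_subgroup: "is_subgroup D \<Longrightarrow> d \<in> D \<Longrightarrow> gmult k (d::'a::ab_group_add) \<in> D"
  by (induction k) (auto simp: gmult_Suc is_subgroup_def)

lemma mem_pmultA_iff: "x \<in> pmultA p n \<longleftrightarrow> (\<exists>y. x = gmult (p ^ n) y)"
  by (auto simp: pmultA_def)

lemma gmult_in_pmultA: "gmult (p ^ n) x \<in> pmultA p n"
  by (auto simp: pmultA_def)

lemma pmultA_0 [simp]: "(0::'a::ab_group_add) \<in> pmultA p n"
  by (metis gmult_0_right gmult_in_pmultA)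

lemma pmultA_add: "x \<in> pmultA p n \<Longrightarrow> y \<in> pmultA p n \<Longrightarrow> x + (y::'a::ab_group_add) \<in> pmultA p n"
  unfolding mem_pmultA_iff by (metis gmult_add_right)

lemma pmultA_minus: "x \<in> pmultA p n \<Longrightarrow> - (x::'a::ab_group_add) \<in> pmultA p n"
  unfolding mem_pmultA_iff by (metis gmult_minus_right)

lemma pmultA_minus_iff: "- (x::'a::ab_group_add) \<in> pmultA p n \<longleftrightarrow> x \<in> pmultA p n"
  by (metis pmultA_minus minus_minus)

lemma pmultA_diff: "x \<in> pmultA p n \<Longrightarrow> y \<in> pmultA p n \<Longrightarrow> x - (y::'a::ab_group_add) \<in> pmultA p n"
  by (metis pmultA_add pmultA_minus diff_conv_add_uminus)

lemma pmultA_sum: "(\<And>i. i \<in> F \<Longrightarrow> f i \<in> pmultA p n) \<Longrightarrow> sum f F \<in> (pmultA p n :: 'a::ab_group_add set)"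
  by (induction F rule: infinite_finite_induct) (simp_all add: pmultA_add)

lemma subgroup_pmultA: "is_subgroup (pmultA p n :: 'a::ab_group_add set)"
  by (simp add: is_subgroup_def pmultA_add pmultA_minus)

lemma pmultA_gmult: "x \<in> pmultA p n \<Longrightarrow> gmult k (x::'a::ab_group_add) \<in> pmultA p n"
  by (rule gmult_in_subgroup[OF subgroup_pmultA])

lemma pmultA_antimono:
  assumes "m \<le> n" "x \<in> pmultA p n" shows "(x::'a::ab_group_add) \<in> pmultA p m"
proof -
  obtain y where "x = gmult (p ^ n) y" using assms(2) mem_pmultA_iff by blast
  also have "\<dots> = gmult (p ^ m) (gmult (p ^ (n - m)) y)"
    using assms(1) by (simp flip: gmult_mult power_add)
  finally show ?thesis by (simp add: gmult_in_pmultA)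
qed

lemma gmult_in_pmultA_if_dvd: "p ^ j dvd e \<Longrightarrow> gmult e (x::'a::ab_group_add) \<in> pmultA p j"
  by (metis dvd_def gmult_mult gmult_in_pmultA)

lemma mem_pcoset_iff: "x \<in> pcoset p n a \<longleftrightarrow> x - a \<in> (pmultA p n :: 'a::ab_group_add set)"
  unfolding pcoset_def by (auto simp: image_iff intro!: bexI[of _ "x - a"])

lemma pcoset_eq_iff: "pcoset p n a = pcoset p n b \<longleftrightarrow> a - b \<in> (pmultA p n :: 'a::ab_group_add set)"
proof
  assume "pcoset p n a = pcoset p n b"
  moreover have "a \<in> pcoset p n a" by (simp add: mem_pcoset_iff)
  ultimately show "a - b \<in> pmultA p n" by (simp add: mem_pcoset_iff)
next
  assume ab: "a - b \<in> pmultA p n"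
  have "x - b = (x - a) + (a - b)" "x - a = (x - b) - (a - b)" for x by simp_all
  then have "x - a \<in> pmultA p n \<longleftrightarrow> x - b \<in> pmultA p n" for x
    using ab pmultA_add pmultA_diff by metis
  then show "pcoset p n a = pcoset p n b" by (auto simp: mem_pcoset_iff)
qed

lemma pcoset_Suc_subset:
  assumes "a - b \<in> pmultA p n" shows "pcoset p (Suc n) a \<subseteq> pcoset p n (b::'a::ab_group_add)"
proof
  fix x assume "x \<in> pcoset p (Suc n) a"
  then have "x - a \<in> pmultA p n" unfolding mem_pcoset_iff by (rule pmultA_antimono[rotated]) simp
  then have "(x - a) + (a - b) \<in> pmultA p n" using assms pmultA_add by blast
  then show "x \<in> pcoset p n b" by (simp add: mem_pcoset_iff)
qed

lemma pcoset_diff: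
  "{u - v |u v. u \<in> pcoset p n a \<and> v \<in> pcoset p n b} = pcoset p n (a - (b::'a::ab_group_add))"
proof (rule set_eqI, rule iffI)
  fix x assume "x \<in> {u - v |u v. u \<in> pcoset p n a \<and> v \<in> pcoset p n b}"
  then obtain u v where "x = u - v" "u - a \<in> pmultA p n" "v - b \<in> pmultA p n"
    by (auto simp: mem_pcoset_iff)
  then have "(u - a) - (v - b) \<in> pmultA p n" by (simp add: pmultA_diff)
  moreover have "(u - a) - (v - b) = x - (a - b)" using \<open>x = u - v\<close> by simp
  ultimately show "x \<in> pcoset p n (a - b)" by (simp add: mem_pcoset_iff)
next
  fix x assume "x \<in> pcoset p n (a - b)"
  then have "x + b \<in> pcoset p n a" "b \<in> pcoset p n b" by (simp_all add: mem_pcoset_iff diff_diff_eq2)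
  then show "x \<in> {u - v |u v. u \<in> pcoset p n a \<and> v \<in> pcoset p n b}"
    by (metis (mono_tags, lifting) add_diff_cancel mem_Collect_eq)
qed

section \<open>Elements of exact height\<close>

lemma p_group_gmult_coprime:
  assumes "prime p" "p_group p TYPE('a::ab_group_add)" "\<not> p dvd k"
  obtains x where "gmult k (gmult x d) = (d::'a)"
proof -
  obtain r where r: "gmult (p ^ r) d = 0" using assms(2) unfolding p_group_def by blast
  have "coprime k (p ^ r)"
    using assms(1,3) by (metis coprime_commute coprime_power_right_iff prime_imp_coprime)
  moreover have "k \<noteq> 0" using assms(3) by (metis dvd_0_right)
  ultimately obtain x y where xy: "k * x = p ^ r * y + 1" using bezout_nat[of k "p ^ r"] by auto
  have "gmult k (gmult x d) = gmult (p ^ r * y) d + d"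
    by (simp add: gmult_mult[symmetric] xy gmult_Suc add.commute)
  also have "\<dots> = d" using gmult_mult[of y "p ^ r" d] by (simp add: mult.commute r)
  finally show ?thesis by (rule that)
qed

lemma divisible_if_p_divisible:
  assumes "prime p" "p_group p TYPE('a::ab_group_add)" "is_subgroup (D::'a set)"
    and p_div: "\<And>d. d \<in> D \<Longrightarrow> \<exists>e\<in>D. gmult p e = d"
  shows "divisible_set D"
  unfolding divisible_set_def
proof (intro ballI allI impI)
  fix d and k :: nat assume "d \<in> D" "0 < k"
  then show "\<exists>e\<in>D. gmult k e = d"
  proof (induction k arbitrary: d rule: less_induct)
    case (less k)
    show ?case
    proof (cases "p dvd k")
      case True
      then obtain k' where k': "k = p * k'" ..
      then have "0 < k'" "k' < k" using less.prems(2) prime_gt_1_nat[OF assms(1)] by auto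
      obtain e' where "e' \<in> D" "gmult p e' = d" using p_div less.prems(1) by blast
      moreover obtain e where "e \<in> D" "gmult k' e = e'" using less.IH \<open>k' < k\<close> \<open>e' \<in> D\<close> \<open>0 < k'\<close> by blast
      ultimately have "gmult k e = d" using k' by (simp add: gmult_mult)
      then show ?thesis using \<open>e \<in> D\<close> by blast
    next
      case False
      obtain x where "gmult k (gmult x d) = d" using p_group_gmult_coprime[OF assms(1,2) False] .
      then show ?thesis using gmult_in_subgroup[OF assms(3) less.prems(1)] by blast
    qed
  qed
qed

lemma socle_element_in_all_pmultA:
  assumes pure: "\<And>H h. N \<le> H \<Longrightarrow> gmult p h = (0::'a::ab_group_add) \<Longrightarrow> h \<in> pmultA p H \<Longrightarrow> h \<in> pmultA p (Suc H)"
    and "gmult p h = 0" "(h::'a) \<in> pmultA p N"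
  shows "h \<in> pmultA p k"
proof -
  have "h \<in> pmultA p (N + j)" for j
  proof (induction j)
    case 0 show ?case using assms(3) by simp
  next
    case (Suc j) show ?case using pure[OF le_add1 assms(2) Suc.IH] by simp
  qed
  then show ?thesis using pmultA_antimono[of k "N + k" h p] by simp
qed

lemma pmultA_in_all_if_socle_pure:
  assumes "p_group p TYPE('a::ab_group_add)"
    and pure: "\<And>H h. N \<le> H \<Longrightarrow> gmult p h = (0::'a) \<Longrightarrow> h \<in> pmultA p H \<Longrightarrow> h \<in> pmultA p (Suc H)"
    and "(x::'a) \<in> pmultA p N"
  shows "x \<in> pmultA p k"
proof -
  obtain r where "gmult (p ^ r) x = 0" using assms(1) unfolding p_group_def by blast
  then show ?thesis using assms(3)
  proof (induction r arbitrary: x k)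
    case 0 then show ?case by (simp add: gmult_Suc)
  next
    case (Suc r)
    show ?case
    proof (cases "k \<le> N")
      case True then show ?thesis using pmultA_antimono Suc.prems(2) by blast
    next
      case False
      have "gmult (p ^ r) (gmult p x) = 0" using Suc.prems(1) by (simp flip: gmult_mult add: mult.commute)
      then have "gmult p x \<in> pmultA p (Suc k)" using Suc.IH pmultA_gmult Suc.prems(2) by blast
      then obtain z where z: "gmult p x = gmult (p ^ Suc k) z" using mem_pmultA_iff by blast
      define w where "w = x - gmult (p ^ k) z"
      have "gmult p w = 0" using z by (simp add: w_def gmult_diff_right flip: gmult_mult)
      moreover have "gmult (p ^ k) z \<in> pmultA p N"
        using False pmultA_antimono[of N k] gmult_in_pmultA by fastforce
      then have "w \<in> pmultA p N" using Suc.prems(2) by (simp add: w_def pmultA_diff)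
      ultimately have "w \<in> pmultA p k" using socle_element_in_all_pmultA[OF pure] by blast
      then have "w + gmult (p ^ k) z \<in> pmultA p k" using pmultA_add gmult_in_pmultA by blast
      then show ?thesis by (simp add: w_def)
    qed
  qed
qed

lemma exists_socle_element_of_height:
  assumes "prime p" "p_group p TYPE('a::ab_group_add)" "reduced_group TYPE('a)"
    and "\<not> bounded_group TYPE('a)"
  shows "\<exists>H\<ge>N. \<exists>h::'a. gmult p h = 0 \<and> h \<in> pmultA p H \<and> h \<notin> pmultA p (Suc H)"
proof (rule ccontr)
  assume "\<not> ?thesis"
  then have pure: "\<And>H h. N \<le> H \<Longrightarrow> gmult p h = (0::'a) \<Longrightarrow> h \<in> pmultA p H \<Longrightarrow> h \<in> pmultA p (Suc H)"
    by blast
  have "\<exists>e\<in>pmultA p N. gmult p e = d" if d: "d \<in> pmultA p N" for d :: 'a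
  proof -
    obtain z where "d = gmult (p ^ Suc N) z"
      using pmultA_in_all_if_socle_pure[OF assms(2) pure d] mem_pmultA_iff by blast
    then have "d = gmult p (gmult (p ^ N) z)" by (simp add: gmult_mult)
    then show ?thesis using gmult_in_pmultA by blast
  qed
  then have "divisible_set (pmultA p N :: 'a set)"
    by (rule divisible_if_p_divisible[OF assms(1,2) subgroup_pmultA])
  then have "(pmultA p N :: 'a set) = {0}" using assms(3) subgroup_pmultA unfolding reduced_group_def by blast
  then have "\<forall>a::'a. gmult (p ^ N) a = 0" using gmult_in_pmultA by blast
  moreover have "p ^ N > 0" using assms(1) prime_gt_0_nat by simp
  ultimately show False using assms(4) unfolding bounded_group_def by blast
qed

definition height_witnesses :: "nat \<Rightarrow> (nat \<Rightarrow> nat) \<Rightarrow> (nat \<Rightarrow> 'a::ab_group_add) \<Rightarrow> bool" where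
  "height_witnesses p n g \<longleftrightarrow> strict_mono n \<and> (\<forall>k. gmult (p ^ Suc (n k)) (g k) = 0)
      \<and> (\<forall>k. gmult (p ^ n k) (g k) \<notin> pmultA p (Suc (n k)))"

lemma height_witnesses_exist:
  assumes "prime p" "p_group p TYPE('a::ab_group_add)" "reduced_group TYPE('a)"
    and "\<not> bounded_group TYPE('a)"
  obtains n and g :: "nat \<Rightarrow> 'a::ab_group_add" where "height_witnesses p n g"
proof -
  have "\<exists>H (g::'a). N \<le> H \<and> gmult (p ^ Suc H) g = 0 \<and> gmult (p ^ H) g \<notin> pmultA p (Suc H)" for N
  proof -
    obtain H and h :: 'a where H: "N \<le> H" "gmult p h = 0" "h \<in> pmultA p H" "h \<notin> pmultA p (Suc H)"
      using exists_socle_element_of_height[OF assms] by blast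
    obtain g where g: "h = gmult (p ^ H) g" using H(3) mem_pmultA_iff by blast
    have "gmult (p ^ Suc H) g = 0" using H(2) by (simp add: g gmult_mult)
    then show ?thesis using H g by blast
  qed
  then obtain Hf and gf :: "nat \<Rightarrow> 'a" where HG: "\<And>N. N \<le> Hf N" "\<And>N. gmult (p ^ Suc (Hf N)) (gf N) = 0"
    "\<And>N. gmult (p ^ (Hf N)) (gf N) \<notin> pmultA p (Suc (Hf N))" by metis
  define a where "a = rec_nat 0 (\<lambda>_ x. Suc (Hf x))"
  have "a (Suc k) = Suc (Hf (a k))" for k by (simp add: a_def)
  then have "Hf (a k) < Hf (a (Suc k))" for k using HG(1)[of "a (Suc k)"] by simp
  then have "strict_mono (Hf \<circ> a)" unfolding strict_mono_Suc_iff by simp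
  then show ?thesis using that[of "Hf \<circ> a" "gf \<circ> a"] HG unfolding height_witnesses_def by simp
qed

section \<open>Convergent sums in \<open>L\<^sub>\<omega>(A)\<close>\<close>

definition Lsupp :: "nat \<Rightarrow> ('i \<Rightarrow> 'a::ab_group_add) \<Rightarrow> nat \<Rightarrow> 'i set" where
  "Lsupp p c N = {i. c i \<notin> pmultA p N}"

definition Lsummable :: "nat \<Rightarrow> ('i \<Rightarrow> 'a::ab_group_add) \<Rightarrow> bool" where
  "Lsummable p c \<longleftrightarrow> (\<forall>N. finite (Lsupp p c N))"

definition Lsum :: "nat \<Rightarrow> ('i \<Rightarrow> 'a::ab_group_add) \<Rightarrow> nat \<Rightarrow> 'a set" where
  "Lsum p c = (\<lambda>N. pcoset p N (sum c (Lsupp p c N)))"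

lemma Lsupp_Suc: "Lsupp p c N \<subseteq> Lsupp p c (Suc N)"
  unfolding Lsupp_def using pmultA_antimono[of N "Suc N"] by auto

lemma Lsum_eq_pcoset_sum:
  assumes "finite F" "Lsupp p c N \<subseteq> F"
  shows "Lsum p c N = pcoset p N (sum c F)"
proof -
  have "sum c F = sum c (Lsupp p c N) + sum c (F - Lsupp p c N)"
    by (metis assms sum.subset_diff add.commute)
  moreover have "sum c (F - Lsupp p c N) \<in> pmultA p N"
    by (rule pmultA_sum) (auto simp: Lsupp_def)
  ultimately have "sum c (Lsupp p c N) - sum c F \<in> pmultA p N"
    by (simp add: pmultA_minus)
  then show ?thesis unfolding Lsum_def by (simp add: pcoset_eq_iff)
qed

lemma Lsum_in_Lomega:
  assumes "Lsummable p c" shows "Lsum p c \<in> Lomega p"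
  unfolding Lomega_def
proof (intro CollectI conjI allI)
  fix n show "\<exists>a. Lsum p c n = pcoset p n a" by (auto simp: Lsum_def)
next
  fix n
  have "Lsum p c n = pcoset p n (sum c (Lsupp p c (Suc n)))"
    using assms Lsupp_Suc[of p c n] by (intro Lsum_eq_pcoset_sum) (auto simp: Lsummable_def)
  moreover have "Lsum p c (Suc n) \<subseteq> pcoset p n (sum c (Lsupp p c (Suc n)))"
    unfolding Lsum_def by (rule pcoset_Suc_subset) simp
  ultimately show "Lsum p c (Suc n) \<subseteq> Lsum p c n" by simp
qed

lemma Lsupp_subset_support: "(\<And>i. i \<notin> F \<Longrightarrow> c i = 0) \<Longrightarrow> Lsupp p c N \<subseteq> F"
  unfolding Lsupp_def by force

lemma Lsum_eq_kappa:
  assumes "finite F" "\<And>i. i \<notin> F \<Longrightarrow> c i = 0"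
  shows "Lsum p c = kappa p (sum c F)"
  using Lsum_eq_pcoset_sum[OF assms(1) Lsupp_subset_support[OF assms(2)]] by (auto simp: kappa_def)

lemma Lsum_0: "Lsum p (\<lambda>i. 0::'a::ab_group_add) = Lzero p"
  using Lsum_eq_kappa[of "{}" "\<lambda>i. 0::'a" p] by (simp add: Lzero_def)

lemma kappa_in_Lomega: "kappa p (a::'a::ab_group_add) \<in> Lomega p"
  unfolding Lomega_def kappa_def using pcoset_Suc_subset[of a a p] by auto

lemma Lzero_in_Lomega: "Lzero p \<in> (Lomega p :: (nat \<Rightarrow> 'a::ab_group_add set) set)"
  unfolding Lzero_def by (rule kappa_in_Lomega)

lemma Lsupp_diff_subset: "Lsupp p (\<lambda>i. c i - d i) N \<subseteq> Lsupp p c N \<union> Lsupp p d N"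
  unfolding Lsupp_def using pmultA_diff by blast

lemma Lsummable_diff: "Lsummable p c \<Longrightarrow> Lsummable p d \<Longrightarrow> Lsummable p (\<lambda>i. c i - d i)"
  unfolding Lsummable_def by (blast intro: finite_subset[OF Lsupp_diff_subset] finite_UnI)

lemma Ldiff_Lsum:
  assumes "Lsummable p c" "Lsummable p d"
  shows "Ldiff (Lsum p c) (Lsum p d) = Lsum p (\<lambda>i. c i - d i)"
proof
  fix N
  let ?F = "Lsupp p c N \<union> Lsupp p d N"
  have F: "finite ?F" using assms by (simp add: Lsummable_def)
  have "Lsum p c N = pcoset p N (sum c ?F)" "Lsum p d N = pcoset p N (sum d ?F)"
    by (rule Lsum_eq_pcoset_sum[OF F], blast)+
  moreover have "Lsum p (\<lambda>i. c i - d i) N = pcoset p N (sum (\<lambda>i. c i - d i) ?F)"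
    by (rule Lsum_eq_pcoset_sum[OF F Lsupp_diff_subset])
  ultimately show "Ldiff (Lsum p c) (Lsum p d) N = Lsum p (\<lambda>i. c i - d i) N"
    unfolding Ldiff_def by (simp add: pcoset_diff sum_subtractf)
qed

lemma Lsum_diff_eq_Lzero:
  assumes "Lsummable p c" "Lsummable p d" "Lsum p c = Lsum p d"
  shows "Lsum p (\<lambda>i. c i - d i) = Lzero p"
  using Ldiff_Lsum[OF assms(1,2)] Ldiff_Lsum[OF assms(2,2)] assms(3) by (simp add: Lsum_0)

section \<open>The reduction from the Cantor space\<close>

lemma zero_in_prufer [simp]: "0 \<in> prufer p"
  by (auto simp: prufer_def intro!: exI[of _ 0])

lemma prufer_scaled_integral:
  assumes "t \<in> prufer p"
  obtains v z where "t * of_nat p ^ v = of_int z"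
  using assms by (auto simp: prufer_def elim!: Ints_cases)

lemma scaled_integral_mono:
  fixes t :: rat
  assumes "t * of_nat p ^ v = of_int z" "v \<le> w"
  shows "t * of_nat p ^ w = of_int (z * int p ^ (w - v))"
proof -
  have "t * of_nat p ^ w = t * of_nat p ^ v * of_nat p ^ (w - v)"
    using assms(2) by (simp add: power_add[symmetric])
  then show ?thesis by (simp add: assms(1))
qed

lemma prufer_common_scaled_integral:
  assumes "a \<in> prufer p" "b \<in> prufer p"
  obtains v za zb where "a * of_nat p ^ v = of_int za" "b * of_nat p ^ v = of_int zb"
proof -
  obtain va za vb zb where "a * of_nat p ^ va = of_int za" "b * of_nat p ^ vb = of_int zb"
    using prufer_scaled_integral assms by metis
  then show ?thesis
    using that scaled_integral_mono[of a p va za "max va vb"] scaled_integral_mono[of b p vb zb "max va vb"]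
    by (metis max.cobounded1 max.cobounded2)
qed

lemma padd_scaled_integral:
  assumes "a * of_nat p ^ v = of_int za" "b * of_nat p ^ v = of_int zb"
  shows "padd a b * of_nat p ^ v = of_int (za + zb - \<lfloor>a + b\<rfloor> * int p ^ v)"
  using assms unfolding padd_def frac_def by (simp add: algebra_simps)

lemma padd_in_prufer:
  assumes "a \<in> prufer p" "b \<in> prufer p"
  shows "padd a b \<in> prufer p"
proof -
  obtain v za zb where "a * of_nat p ^ v = of_int za" "b * of_nat p ^ v = of_int zb"
    using prufer_common_scaled_integral[OF assms] .
  then have "padd a b * of_nat p ^ v \<in> \<int>" using padd_scaled_integral by (metis Ints_of_int)
  moreover have "0 \<le> padd a b" "padd a b < 1" by (simp_all add: padd_def frac_lt_1)
  ultimately show ?thesis unfolding prufer_def by blast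
qed

lemma inverse_power_in_prufer:
  assumes "p \<ge> 2"
  shows "1 / of_nat p ^ Suc M \<in> prufer p"
proof -
  have "(of_nat p :: rat) ^ Suc M > 1" using assms by (intro one_less_power) auto
  then have "1 / (of_nat p :: rat) ^ Suc M < 1" by simp
  moreover have "1 / (of_nat p :: rat) ^ Suc M * of_nat p ^ Suc M \<in> \<int>" using assms by simp
  ultimately show ?thesis unfolding prufer_def by (auto intro!: exI[of _ "Suc M"])
qed

text \<open>If the
  denominator of \<open>t\<close> is \<open>p ^ v\<close>, the floor is exact whenever \<open>v \<le> n k + m + 1\<close>, and then the
  coefficient is additive in \<open>t\<close> modulo the order of \<open>g k\<close>; so the cocycle of \<open>Phi p n g x\<close>
  is a finite sum, an element of \<open>\<kappa>(A)\<close>.\<close>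

definition Phi_coeff :: "nat \<Rightarrow> (nat \<Rightarrow> nat) \<Rightarrow> rat \<Rightarrow> nat \<Rightarrow> nat \<Rightarrow> nat" where
  "Phi_coeff p n t m k = nat (\<lfloor>t * of_nat p ^ (n k + m + 1)\<rfloor> mod int (p ^ Suc (n k)))"

definition Phi_terms ::
    "nat \<Rightarrow> (nat \<Rightarrow> nat) \<Rightarrow> (nat \<Rightarrow> 'a::ab_group_add) \<Rightarrow> (nat \<times> nat \<Rightarrow> bool) \<Rightarrow> rat \<Rightarrow> nat \<times> nat \<Rightarrow> 'a" where
  "Phi_terms p n g x t = (\<lambda>(m, k). if x (m, k) then gmult (Phi_coeff p n t m k) (g k) else 0)"

definition Phi ::
    "nat \<Rightarrow> (nat \<Rightarrow> nat) \<Rightarrow> (nat \<Rightarrow> 'a::ab_group_add) \<Rightarrow> (nat \<times> nat \<Rightarrow> bool) \<Rightarrow> rat \<Rightarrow> nat \<Rightarrow> 'a set" where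
  "Phi p n g x = (\<lambda>t. if t \<in> prufer p then Lsum p (Phi_terms p n g x t) else Lzero p)"

lemma Phi_coeff_eq:
  assumes "p > 0" "t * of_nat p ^ v = of_int z" "v \<le> n k + m + 1"
  shows "int (Phi_coeff p n t m k) = (z * int p ^ (n k + m + 1 - v)) mod int (p ^ Suc (n k))"
proof -
  have "\<lfloor>t * of_nat p ^ (n k + m + 1)\<rfloor> = z * int p ^ (n k + m + 1 - v)"
    using scaled_integral_mono[OF assms(2,3)] by (metis floor_of_int)
  then show ?thesis using assms(1) by (simp add: Phi_coeff_def)
qed

lemma Phi_coeff_eq_0:
  assumes "p > 0" "t * of_nat p ^ v = of_int z" "v \<le> m"
  shows "Phi_coeff p n t m k = 0"
proof -
  have "int p ^ Suc (n k) dvd int p ^ (n k + m + 1 - v)"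
    using assms(3) by (intro le_imp_power_dvd) simp
  then have "int (p ^ Suc (n k)) dvd z * int p ^ (n k + m + 1 - v)"
    by (metis dvd_mult of_nat_power)
  then show ?thesis using Phi_coeff_eq[where n=n and k=k and m=m, OF assms(1,2)] assms(3) by simp
qed

lemma pow_dvd_Phi_coeff:
  assumes "p > 0" "t * of_nat p ^ v = of_int z" "v \<le> n k + m + 1"
  shows "p ^ (n k + m + 1 - v) dvd Phi_coeff p n t m k"
proof (cases "v \<le> m")
  case True then show ?thesis using Phi_coeff_eq_0[OF assms(1,2)] by simp
next
  case False
  let ?j = "n k + m + 1 - v"
  have "int p ^ ?j dvd int (p ^ Suc (n k))" using False by (simp add: le_imp_power_dvd)
  then have "int p ^ ?j dvd (z * int p ^ ?j) mod int (p ^ Suc (n k))" by (simp add: dvd_mod_iff)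
  then show ?thesis
    using Phi_coeff_eq[where n=n and k=k and m=m, OF assms] by (metis of_nat_dvd_iff of_nat_power)
qed

lemma Phi_coeff_padd:
  assumes "p > 0" "a * of_nat p ^ v = of_int za" "b * of_nat p ^ v = of_int zb" "v \<le> n k + m + 1"
  shows "Phi_coeff p n (padd a b) m k mod p ^ Suc (n k)
       = (Phi_coeff p n a m k + Phi_coeff p n b m k) mod p ^ Suc (n k)"
proof -
  let ?E = "n k + m + 1" and ?P = "int (p ^ Suc (n k))"
  define A where "A = za * int p ^ (?E - v)"
  define B where "B = zb * int p ^ (?E - v)"
  have "a * of_nat p ^ ?E = of_int A" "b * of_nat p ^ ?E = of_int B"
    unfolding A_def B_def using scaled_integral_mono assms(2-4) by blast+
  then have "\<lfloor>padd a b * of_nat p ^ ?E\<rfloor> = A + B - \<lfloor>a + b\<rfloor> * int p ^ ?E"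
    "\<lfloor>a * of_nat p ^ ?E\<rfloor> = A" "\<lfloor>b * of_nat p ^ ?E\<rfloor> = B"
    using padd_scaled_integral by (metis floor_of_int)+
  moreover have "?P dvd \<lfloor>a + b\<rfloor> * int p ^ ?E"
    by (simp add: le_imp_power_dvd)
  then obtain q where q: "\<lfloor>a + b\<rfloor> * int p ^ ?E = ?P * q" ..
  have "(A + B - \<lfloor>a + b\<rfloor> * int p ^ ?E) mod ?P = (A + B) mod ?P"
    using mod_mult_self2[of "A + B" ?P "- q"] by (simp only: q diff_conv_add_uminus mult_minus_right)
  ultimately have "int (Phi_coeff p n (padd a b) m k) = (A + B) mod ?P"
    "int (Phi_coeff p n a m k) = A mod ?P" "int (Phi_coeff p n b m k) = B mod ?P"
    using assms(1) by (simp_all add: Phi_coeff_def)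
  then have "int (Phi_coeff p n (padd a b) m k) mod ?P = int (Phi_coeff p n a m k + Phi_coeff p n b m k) mod ?P"
    by (simp add: mod_add_eq)
  then show ?thesis by (metis of_nat_eq_iff zmod_int)
qed

lemma Phi_coeff_inverse_power:
  assumes "p \<ge> 2"
  shows "Phi_coeff p n (1 / of_nat p ^ Suc M) M k = p ^ n k"
proof -
  have p0: "p > 0" using assms by simp
  have "(1 / of_nat p ^ Suc M) * (of_nat p :: rat) ^ Suc M = of_int 1" using assms by simp
  from Phi_coeff_eq[where n=n and k=k and m=M, OF p0 this]
  have "int (Phi_coeff p n (1 / of_nat p ^ Suc M) M k) = int p ^ n k mod int (p ^ Suc (n k))"
    by simp
  also have "\<dots> = int p ^ n k" using assms by (simp add: zmod_trivial_iff)
  finally show ?thesis by (metis of_nat_eq_iff of_nat_power)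
qed

lemma Phi_coeff_0: "Phi_coeff p n 0 m k = 0"
  by (simp add: Phi_coeff_def)

lemma Lsupp_Phi_terms:
  assumes "height_witnesses p n g" "p > 0" "t * of_nat p ^ v = of_int z"
  shows "Lsupp p (Phi_terms p n g x t) N \<subseteq> {..<v + N} \<times> {..<v + N}"
proof
  fix i assume i: "i \<in> Lsupp p (Phi_terms p n g x t) N"
  obtain m k where mk: "i = (m, k)" by fastforce
  show "i \<in> {..<v + N} \<times> {..<v + N}"
  proof (rule ccontr)
    assume "i \<notin> {..<v + N} \<times> {..<v + N}"
    then have "v + N \<le> m \<or> v + N \<le> k" by (auto simp: mk)
    moreover have "k \<le> n k" using assms(1) strict_mono_imp_increasing unfolding height_witnesses_def by blast
    ultimately have "v \<le> n k + m + 1" "N \<le> n k + m + 1 - v" by auto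
    then have "gmult (Phi_coeff p n t m k) (g k) \<in> pmultA p N"
      using pmultA_antimono gmult_in_pmultA_if_dvd[OF pow_dvd_Phi_coeff[OF assms(2,3)]] by blast
    then show False using i by (simp add: Lsupp_def Phi_terms_def mk split: if_splits)
  qed
qed

lemma Lsummable_Phi_terms:
  assumes "height_witnesses p n g" "p > 0" "t \<in> prufer p"
  shows "Lsummable p (Phi_terms p n g x t)"
proof -
  obtain v z where "t * of_nat p ^ v = of_int z" using prufer_scaled_integral[OF assms(3)] .
  then show ?thesis
    unfolding Lsummable_def by (metis Lsupp_Phi_terms[OF assms(1,2)] finite_subset finite_SigmaI finite_lessThan)
qed

lemma Phi_eq_pcoset_sum_box:
  assumes "height_witnesses p n g" "p > 0" "t \<in> prufer p" "t * of_nat p ^ v = of_int z"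
  shows "Phi p n g x t N = pcoset p N (sum (Phi_terms p n g x t) ({..<v + N} \<times> {..<v + N}))"
  using assms(3) Lsum_eq_pcoset_sum[OF _ Lsupp_Phi_terms[OF assms(1,2,4)]] by (simp add: Phi_def)

lemma Phi_in_Lomega:
  assumes "height_witnesses p n g" "p > 0"
  shows "Phi p n g x t \<in> Lomega p"
  using Lsum_in_Lomega[OF Lsummable_Phi_terms[OF assms]] by (simp add: Phi_def Lzero_in_Lomega)

lemma Phi_at_0: "Phi p n g x 0 = Lzero p"
proof -
  have "Phi_terms p n g x 0 = (\<lambda>i. 0)" by (auto simp: Phi_terms_def Phi_coeff_0)
  then show ?thesis by (simp add: Phi_def Lsum_0)
qed

lemma Phi_terms_cong: "x i = x' i \<Longrightarrow> Phi_terms p n g x t i = Phi_terms p n g x' t i"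
  by (cases i) (simp add: Phi_terms_def)

lemma Phi_terms_cocycle:
  assumes "height_witnesses p n g" "p > 0" "a * of_nat p ^ v = of_int za" "b * of_nat p ^ v = of_int zb"
    and "(m, k) \<notin> {..<v} \<times> {..<v}"
  shows "Phi_terms p n g x (padd a b) (m, k) - Phi_terms p n g x a (m, k) - Phi_terms p n g x b (m, k) = 0"
proof -
  have "k \<le> n k" using assms(1) strict_mono_imp_increasing unfolding height_witnesses_def by blast
  then have "v \<le> n k + m + 1" using assms(5) by auto
  moreover have "gmult (p ^ Suc (n k)) (g k) = 0" using assms(1) by (simp add: height_witnesses_def)
  ultimately have "gmult (Phi_coeff p n (padd a b) m k) (g k) = gmult (Phi_coeff p n a m k + Phi_coeff p n b m k) (g k)"
    using Phi_coeff_padd[OF assms(2-4)] by (intro gmult_eq_if_mod_eq)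
  then show ?thesis by (simp add: Phi_terms_def gmult_add_left)
qed

lemma cocyc_Phi:
  assumes "height_witnesses p n g" "p > 0" "a \<in> prufer p" "b \<in> prufer p"
  obtains v where "\<And>x. cocyc (Phi p n g x) a b = kappa p
      (\<Sum>i\<in>{..<v} \<times> {..<v}. Phi_terms p n g x (padd a b) i - Phi_terms p n g x a i - Phi_terms p n g x b i)"
proof -
  obtain v za zb where v: "a * of_nat p ^ v = of_int za" "b * of_nat p ^ v = of_int zb"
    using prufer_common_scaled_integral[OF assms(3,4)] .
  have "cocyc (Phi p n g x) a b = kappa p
      (\<Sum>i\<in>{..<v} \<times> {..<v}. Phi_terms p n g x (padd a b) i - Phi_terms p n g x a i - Phi_terms p n g x b i)" for x
  proof -
    note summable = Lsummable_Phi_terms[OF assms(1,2)]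
    have "cocyc (Phi p n g x) a b = Lsum p
        (\<lambda>i. Phi_terms p n g x (padd a b) i - Phi_terms p n g x a i - Phi_terms p n g x b i)"
      using assms(3,4) padd_in_prufer[OF assms(3,4)]
      by (simp add: cocyc_def Phi_def Ldiff_Lsum Lsummable_diff summable)
    also have "\<dots> = kappa p
        (\<Sum>i\<in>{..<v} \<times> {..<v}. Phi_terms p n g x (padd a b) i - Phi_terms p n g x a i - Phi_terms p n g x b i)"
      using Phi_terms_cocycle[OF assms(1,2) v] by (intro Lsum_eq_kappa) auto
    finally show ?thesis .
  qed
  then show ?thesis by (rule that)
qed

lemma Phi_in_Hhat:
  assumes "height_witnesses p n g" "p > 0"
  shows "Phi p n g x \<in> Hhat p"
  unfolding Hhat_def
proof (intro CollectI conjI ballI allI impI)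
  fix t show "Phi p n g x t \<in> Lomega p" by (rule Phi_in_Lomega[OF assms])
next
  fix t assume "t \<notin> prufer p" then show "Phi p n g x t = Lzero p" by (simp add: Phi_def)
next
  show "Phi p n g x 0 = Lzero p" by (rule Phi_at_0)
next
  fix a b assume "a \<in> prufer p" "b \<in> prufer p"
  then obtain v where "cocyc (Phi p n g x) a b = kappa p
      (\<Sum>i\<in>{..<v} \<times> {..<v}. Phi_terms p n g x (padd a b) i - Phi_terms p n g x a i - Phi_terms p n g x b i)"
    using cocyc_Phi[OF assms] by blast
  then show "cocyc (Phi p n g x) a b \<in> range (kappa p)" by simp
qed

lemma Phi_in_NH_if_finite_columns:
  assumes "height_witnesses p n g" "p > 0" "\<And>m. finite {k. x (m, k)}"
  shows "Phi p n g x \<in> NH p"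
proof -
  have "Phi p n g x t \<in> range (kappa p)" if t: "t \<in> prufer p" for t
  proof -
    obtain v z where vz: "t * of_nat p ^ v = of_int z" using prufer_scaled_integral[OF t] .
    define F where "F = (\<Union>m<v. {m} \<times> {k. x (m, k)})"
    have "finite F" unfolding F_def using assms(3) by auto
    moreover have "Phi_terms p n g x t (m, k) = 0" if "(m, k) \<notin> F" for m k
    proof (cases "m < v")
      case True
      then have "\<not> x (m, k)" using that by (auto simp: F_def)
      then show ?thesis by (simp add: Phi_terms_def)
    next
      case False
      then show ?thesis using Phi_coeff_eq_0[OF assms(2) vz, of m n k] by (simp add: Phi_terms_def)
    qed
    ultimately have "Lsum p (Phi_terms p n g x t) = kappa p (sum (Phi_terms p n g x t) F)"
      by (intro Lsum_eq_kappa) auto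
    then show ?thesis using t by (simp add: Phi_def)
  qed
  then show ?thesis unfolding NH_def using Phi_in_Hhat[OF assms(1,2)] by blast
qed

definition agrees_below :: "nat \<Rightarrow> (nat \<times> nat \<Rightarrow> bool) \<Rightarrow> (nat \<times> nat \<Rightarrow> bool) \<Rightarrow> bool" where
  "agrees_below M s x \<longleftrightarrow> (\<forall>m<M. \<forall>k. x (m, k) = s (m, k))"

lemma Phi_terms_inverse_power_column:
  assumes "p \<ge> 2"
  shows "Phi_terms p n g x (1 / of_nat p ^ Suc M) (M, k) = (if x (M, k) then gmult (p ^ n k) (g k) else 0)"
  unfolding Phi_terms_def using Phi_coeff_inverse_power[OF assms, of n M k] by simp

lemma Phi_terms_inverse_power_beyond:
  assumes "p \<ge> 2" "M < m"
  shows "Phi_terms p n g x (1 / of_nat p ^ Suc M) (m, k) = 0"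
proof -
  have "p > 0" "1 / of_nat p ^ Suc M * (of_nat p :: rat) ^ Suc M = of_int 1" using assms(1) by simp_all
  then have "Phi_coeff p n (1 / of_nat p ^ Suc M) m k = 0"
    by (rule Phi_coeff_eq_0) (use assms(2) in simp)
  then show ?thesis by (simp add: Phi_terms_def)
qed

lemma Phi_terms_inverse_power_diff:
  assumes "p \<ge> 2" "agrees_below M x x'"
  shows "Phi_terms p n g x (1 / of_nat p ^ Suc M) (m, k) - Phi_terms p n g x' (1 / of_nat p ^ Suc M) (m, k)
       = (if m = M \<and> x (M, k) \<noteq> x' (M, k)
          then (if x (M, k) then gmult (p ^ n k) (g k) else - gmult (p ^ n k) (g k)) else 0)"
proof -
  consider "m < M" | "M < m" | "m = M" by linarith
  then show ?thesis
  proof cases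
    case 1 then show ?thesis using assms(2) by (simp add: agrees_below_def Phi_terms_def)
  next
    case 2 then show ?thesis
      using Phi_terms_inverse_power_beyond[OF assms(1) 2, where n=n and g=g and x=x and k=k]
        Phi_terms_inverse_power_beyond[OF assms(1) 2, where n=n and g=g and x=x' and k=k]
      by simp
  next
    case 3 then show ?thesis
      using Phi_terms_inverse_power_column[OF assms(1), of n g x M k]
        Phi_terms_inverse_power_column[OF assms(1), of n g x' M k]
      by auto
  qed
qed

lemma Phi_inverse_power_determines_column:
  assumes hw: "height_witnesses p n g" and "p \<ge> 2" "agrees_below M x x'"
    and "Phi p n g x (1 / of_nat p ^ Suc M) = Phi p n g x' (1 / of_nat p ^ Suc M)"
  shows "x (M, k) = x' (M, k)"
proof (rule ccontr)
  assume "x (M, k) \<noteq> x' (M, k)"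
  define k0 where "k0 = (LEAST k. x (M, k) \<noteq> x' (M, k))"
  have k0: "x (M, k0) \<noteq> x' (M, k0)" "\<And>k. k < k0 \<Longrightarrow> x (M, k) = x' (M, k)"
    using LeastI[of "\<lambda>k. x (M, k) \<noteq> x' (M, k)", OF \<open>x (M, k) \<noteq> _\<close>] not_less_Least
    unfolding k0_def by blast+
  define t where "t = 1 / (of_nat p :: rat) ^ Suc M"
  define d where "d i = Phi_terms p n g x t i - Phi_terms p n g x' t i" for i
  define N where "N = Suc (n k0)"
  have t: "t \<in> prufer p" unfolding t_def using inverse_power_in_prufer[OF assms(2)] .
  have "p > 0" using assms(2) by simp
  then have "Lsum p d = Lzero p" unfolding d_def
    using Lsum_diff_eq_Lzero[OF Lsummable_Phi_terms[OF hw _ t] Lsummable_Phi_terms[OF hw _ t]] assms(4) t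
    by (simp add: Phi_def t_def)
  have d: "d (m, k) = (if m = M \<and> x (M, k) \<noteq> x' (M, k)
      then (if x (M, k) then gmult (p ^ n k) (g k) else - gmult (p ^ n k) (g k)) else 0)" for m k
    unfolding d_def t_def by (rule Phi_terms_inverse_power_diff[OF assms(2,3)])
  have "Lsupp p d N \<subseteq> {(M, k0)}"
  proof
    fix i assume i: "i \<in> Lsupp p d N"
    obtain m k where mk: "i = (m, k)" by fastforce
    have "m = M" "x (M, k) \<noteq> x' (M, k)" using i by (auto simp: Lsupp_def mk d split: if_splits)
    then have "\<not> k < k0" using k0(2) by blast
    moreover have "\<not> k0 < k"
    proof
      assume "k0 < k"
      then have "N \<le> n k" using hw unfolding height_witnesses_def strict_mono_def N_def by (simp add: Suc_leI)
      then have "gmult (p ^ n k) (g k) \<in> pmultA p N" using gmult_in_pmultA pmultA_antimono by blast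
      then show False using i by (simp add: Lsupp_def mk d pmultA_minus_iff split: if_splits)
    qed
    ultimately show "i \<in> {(M, k0)}" using mk \<open>m = M\<close> by simp
  qed
  then have "Lsum p d N = pcoset p N (d (M, k0))" using Lsum_eq_pcoset_sum[of "{(M, k0)}" p d N] by simp
  then have "d (M, k0) \<in> pmultA p N"
    using \<open>Lsum p d = Lzero p\<close> by (simp add: Lzero_def kappa_def pcoset_eq_iff pmultA_minus_iff)
  moreover have "gmult (p ^ n k0) (g k0) \<notin> pmultA p N" using hw by (simp add: height_witnesses_def N_def)
  ultimately show False using k0(1) by (simp add: d pmultA_minus_iff split: if_splits)
qed

lemma countable_columns_Phi_in_NH:
  fixes g :: "nat \<Rightarrow> 'a::{ab_group_add, countable}"
  assumes "height_witnesses p n g" "p \<ge> 2"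
  shows "countable {(\<lambda>k. x (M, k)) | x. agrees_below M s x \<and> Phi p n g x \<in> NH p}"
    (is "countable ?K")
proof -
  let ?t = "1 / (of_nat p :: rat) ^ Suc M"
  have "\<forall>y\<in>?K. \<exists>x. agrees_below M s x \<and> Phi p n g x \<in> NH p \<and> y = (\<lambda>k. x (M, k))"
    by blast
  from bchoice[OF this] obtain X
    where X: "\<And>y. y \<in> ?K \<Longrightarrow> agrees_below M s (X y) \<and> Phi p n g (X y) \<in> NH p \<and> y = (\<lambda>k. X y (M, k))"
    by blast
  have inj: "inj_on (\<lambda>y. Phi p n g (X y) ?t) ?K"
  proof (rule inj_onI)
    fix y y' assume y: "y \<in> ?K" "y' \<in> ?K" and eq: "Phi p n g (X y) ?t = Phi p n g (X y') ?t"
    have "agrees_below M (X y) (X y')" using X[OF y(1)] X[OF y(2)] by (simp add: agrees_below_def)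
    then have "X y (M, k) = X y' (M, k)" for k
      by (rule Phi_inverse_power_determines_column[OF assms(1,2) _ eq])
    then show "y = y'" using X[OF y(1)] X[OF y(2)] by auto
  qed
  have "(\<lambda>y. Phi p n g (X y) ?t) ` ?K \<subseteq> range (kappa p)"
  proof (rule image_subsetI)
    fix y assume "y \<in> ?K"
    then have "Phi p n g (X y) \<in> NH p" using X by blast
    then show "Phi p n g (X y) ?t \<in> range (kappa p)"
      using inverse_power_in_prufer[OF assms(2)] by (simp add: NH_def)
  qed
  moreover have "countable (range (kappa p :: 'a \<Rightarrow> _))" by simp
  ultimately have "countable ((\<lambda>y. Phi p n g (X y) ?t) ` ?K)" by (rule countable_subset)
  then show ?thesis by (rule countable_image_inj_on[OF _ inj])
qed

definition cantor_top :: "(nat \<times> nat \<Rightarrow> bool) topology" where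
  "cantor_top = product_topology (\<lambda>_. discrete_topology UNIV) UNIV"

lemma topspace_cantor_top [simp]: "topspace cantor_top = UNIV"
  by (simp add: cantor_top_def)

lemma openin_cantor_topI:
  assumes "\<And>x. x \<in> S \<Longrightarrow> \<exists>F. finite F \<and> (\<forall>z. (\<forall>i\<in>F. z i = x i) \<longrightarrow> z \<in> S)"
  shows "openin cantor_top S"
  unfolding cantor_top_def openin_product_topology_alt
proof
  fix x assume "x \<in> S"
  then obtain F where F: "finite F" "\<forall>z. (\<forall>i\<in>F. z i = x i) \<longrightarrow> z \<in> S" using assms by blast
  define U where "U i = (if i \<in> F then {x i} else UNIV)" for i
  have "{i \<in> UNIV. U i \<noteq> topspace (discrete_topology UNIV)} \<subseteq> F" by (auto simp: U_def)
  then have "finite {i \<in> UNIV. U i \<noteq> topspace (discrete_topology UNIV)}" using F(1) finite_subset by blast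
  moreover have "x \<in> Pi\<^sub>E UNIV U" by (auto simp: U_def)
  moreover have "Pi\<^sub>E UNIV U \<subseteq> S"
  proof
    fix z assume "z \<in> Pi\<^sub>E UNIV U"
    then have "z i = x i" if "i \<in> F" for i using that PiE_mem[of z UNIV U i] by (simp add: U_def)
    then show "z \<in> S" using F(2) by blast
  qed
  ultimately show "\<exists>U. finite {i \<in> UNIV. U i \<noteq> topspace (discrete_topology UNIV)} \<and>
      (\<forall>i\<in>UNIV. openin (discrete_topology UNIV) (U i)) \<and> x \<in> Pi\<^sub>E UNIV U \<and> Pi\<^sub>E UNIV U \<subseteq> S"
    by auto
qed

lemma openin_cantor_topD:
  assumes "openin cantor_top S" "x \<in> S"
  obtains F where "finite F" "\<And>z. (\<forall>i\<in>F. z i = x i) \<Longrightarrow> z \<in> S"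
proof -
  obtain U where U: "finite {i \<in> UNIV. U i \<noteq> topspace (discrete_topology (UNIV::bool set))}"
    "x \<in> Pi\<^sub>E UNIV U" "Pi\<^sub>E UNIV U \<subseteq> S"
    using assms unfolding cantor_top_def openin_product_topology_alt by blast
  define F where "F = {i \<in> UNIV. U i \<noteq> topspace (discrete_topology (UNIV::bool set))}"
  have "z \<in> S" if "\<forall>i\<in>F. z i = x i" for z
  proof -
    have "z i \<in> U i" for i
    proof (cases "i \<in> F")
      case True then show ?thesis using that PiE_mem[OF U(2) UNIV_I] by simp
    next
      case False then show ?thesis by (simp add: F_def)
    qed
    then show ?thesis using U(3) by (auto simp: PiE_iff)
  qed
  then show ?thesis using U(1) that unfolding F_def by blast
qed

lemma cantor_top_Baire:
  assumes "countable \<G>" "\<And>T. T \<in> \<G> \<Longrightarrow> openin cantor_top T"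
    and "\<And>T V. T \<in> \<G> \<Longrightarrow> openin cantor_top V \<Longrightarrow> V \<noteq> {} \<Longrightarrow> T \<inter> V \<noteq> {}"
  shows "\<Inter>\<G> \<noteq> {}"
proof -
  have "compact_space cantor_top" "Hausdorff_space cantor_top" unfolding cantor_top_def
    by (simp_all add: compact_space_product_topology compact_space_discrete_topology
        Hausdorff_space_product_topology)
  then have "locally_compact_space cantor_top \<and> regular_space cantor_top"
    using compact_imp_locally_compact_space compact_Hausdorff_imp_regular_space by blast
  moreover have "openin cantor_top T \<and> cantor_top closure_of T = topspace cantor_top" if "T \<in> \<G>" for T
    using assms(2,3)[OF that] unfolding dense_intersects_open by blast
  ultimately have "cantor_top closure_of \<Inter>\<G> = topspace cantor_top"
    using assms(1) by (intro Baire_category) auto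
  then show ?thesis by (metis closure_of_empty UNIV_not_empty topspace_cantor_top)
qed

lemma borel_sigma_Suc_SucI:
  fixes S :: "nat \<Rightarrow> 'b set"
  assumes "\<And>i. S i \<in> borel_sigma X (Suc n)"
  shows "(\<Union>i. topspace X - S i) \<in> borel_sigma X (Suc (Suc n))"
  using assms unfolding borel_sigma.simps(3) mem_Collect_eq by (intro exI[of _ "\<lambda>i. topspace X - S i"]) blast

lemma borel_sigma_Suc_Suc_iff:
  "S \<in> borel_sigma X (Suc (Suc n))
    \<longleftrightarrow> (\<exists>T :: nat \<Rightarrow> 'b set. (\<forall>i. T i \<in> borel_sigma X (Suc n)) \<and> S = (\<Union>i. topspace X - T i))"
proof
  assume "S \<in> borel_sigma X (Suc (Suc n))"
  then obtain F :: "nat \<Rightarrow> 'b set" where F: "S = \<Union>(range F)" "\<forall>i. \<exists>T\<in>borel_sigma X (Suc n). F i = topspace X - T"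
    by auto
  then obtain T where "\<And>i. T i \<in> borel_sigma X (Suc n)" "\<And>i. F i = topspace X - T i"
    by metis
  then show "\<exists>T :: nat \<Rightarrow> 'b set. (\<forall>i. T i \<in> borel_sigma X (Suc n)) \<and> S = (\<Union>i. topspace X - T i)"
    using F(1) by (intro exI[of _ T]) simp
qed (metis borel_sigma_Suc_SucI)

lemma borel_sigma_vimage:
  assumes "continuous_map X Y f"
  shows "S \<in> borel_sigma Y n \<Longrightarrow> {x \<in> topspace X. f x \<in> S} \<in> borel_sigma X n"
proof (induction n arbitrary: S rule: induct_nat_012)
  case 1
  then show ?case using openin_continuous_map_preimage[OF assms] by simp
next
  case (ge2 n)
  then obtain T :: "nat \<Rightarrow> _" where T: "\<And>i. T i \<in> borel_sigma Y (Suc n)" "S = (\<Union>i. topspace Y - T i)"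
    unfolding borel_sigma_Suc_Suc_iff by blast
  have "{x \<in> topspace X. f x \<in> S} = (\<Union>i. topspace X - {x \<in> topspace X. f x \<in> T i})"
    using assms by (auto simp: T(2) continuous_map_def)
  then show ?case using ge2(2)[OF T(1)] by (simp only: borel_sigma_Suc_SucI)
qed simp

lemma borel_sigma_3_imp_Union_Gdelta:
  assumes "S \<in> borel_sigma X 3"
  shows "\<exists>U :: nat \<Rightarrow> nat \<Rightarrow> 'b set. (\<forall>j i. openin X (U j i)) \<and> S = (\<Union>j. \<Inter>i. U j i)"
proof -
  have "\<exists>T :: nat \<Rightarrow> 'b set. (\<forall>j. \<exists>U :: nat \<Rightarrow> 'b set. (\<forall>i. openin X (U i)) \<and> T j = (\<Union>i. topspace X - U i))
      \<and> S = (\<Union>j. topspace X - T j)"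
    using assms unfolding numeral_3_eq_3 borel_sigma_Suc_Suc_iff by simp
  then obtain T :: "nat \<Rightarrow> 'b set" where S: "S = (\<Union>j. topspace X - T j)"
    and TU: "\<forall>j. \<exists>U :: nat \<Rightarrow> 'b set. (\<forall>i. openin X (U i)) \<and> T j = (\<Union>i. topspace X - U i)"
    by blast
  from choice[OF TU] obtain U :: "nat \<Rightarrow> nat \<Rightarrow> 'b set" where U: "\<forall>j. (\<forall>i. openin X (U j i)) \<and> T j = (\<Union>i. topspace X - U j i)" ..
  then have opn: "\<And>j i. openin X (U j i)" and T: "\<And>j. T j = (\<Union>i. topspace X - U j i)" by simp_all
  have "topspace X - T j = (\<Inter>i. U j i)" for j
    unfolding T using openin_subset[OF opn, of j] by blast
  then have "S = (\<Union>j. \<Inter>i. U j i)" by (simp add: S)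
  then show ?thesis using opn by (intro exI[of _ U] conjI allI)
qed

lemma Lomega_in_range_pcoset:
  assumes "x \<in> Lomega p" shows "x N \<in> range (pcoset p N)"
proof -
  obtain a where "x N = pcoset p N a" using assms unfolding Lomega_def by blast
  then show ?thesis by simp
qed

lemma topspace_Ltop: "topspace (Ltop p) = Lomega p"
  unfolding Ltop_def topspace_subtopology using Lomega_in_range_pcoset by (auto simp: PiE_iff)

lemma openin_LtopD:
  assumes "openin (Ltop p) W" "\<phi> \<in> W"
  obtains J where "finite J" "\<And>\<psi>. \<psi> \<in> Lomega p \<Longrightarrow> (\<forall>N\<in>J. \<psi> N = \<phi> N) \<Longrightarrow> \<psi> \<in> W"
proof -
  obtain T where T: "openin (product_topology (\<lambda>N. discrete_topology (range (pcoset p N))) UNIV) T"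
      "W = T \<inter> Lomega p"
    using assms(1) unfolding Ltop_def openin_subtopology by blast
  then obtain U where U: "finite {N \<in> UNIV. U N \<noteq> topspace (discrete_topology (range (pcoset p N)))}"
      "\<phi> \<in> Pi\<^sub>E UNIV U" "Pi\<^sub>E UNIV U \<subseteq> T"
    using assms(2) unfolding openin_product_topology_alt by blast
  have "\<psi> \<in> W" if "\<psi> \<in> Lomega p" "\<forall>N\<in>{N \<in> UNIV. U N \<noteq> range (pcoset p N)}. \<psi> N = \<phi> N" for \<psi>
  proof -
    have "\<psi> N \<in> U N" for N
    proof (cases "U N = range (pcoset p N)")
      case True then show ?thesis using Lomega_in_range_pcoset[OF that(1)] by simp
    next
      case False then show ?thesis using that(2) PiE_mem[OF U(2) UNIV_I] by simp
    qed
    then show ?thesis using U(3) T(2) that(1) by (auto simp: PiE_iff)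
  qed
  then show ?thesis using U(1) that by simp
qed

lemma openin_cantor_top_Phi_eval:
  assumes "height_witnesses p n g" "p > 0" "t \<in> prufer p" "openin (Ltop p) W"
  shows "openin cantor_top {x. Phi p n g x t \<in> W}"
proof (rule openin_cantor_topI)
  fix x0 assume "x0 \<in> {x. Phi p n g x t \<in> W}"
  then obtain J where J: "finite J" "\<And>\<psi>. \<psi> \<in> Lomega p \<Longrightarrow> (\<forall>N\<in>J. \<psi> N = Phi p n g x0 t N) \<Longrightarrow> \<psi> \<in> W"
    using openin_LtopD[OF assms(4)] by blast
  obtain v z where vz: "t * of_nat p ^ v = of_int z" using prufer_scaled_integral[OF assms(3)] .
  define F where "F = (\<Union>N\<in>J. {..<v + N} \<times> {..<v + N})"
  have "z \<in> {x. Phi p n g x t \<in> W}" if zF: "\<forall>i\<in>F. z i = x0 i" for z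
  proof -
    have "Phi p n g z t N = Phi p n g x0 t N" if "N \<in> J" for N
    proof -
      have "Phi_terms p n g z t i = Phi_terms p n g x0 t i" if "i \<in> {..<v + N} \<times> {..<v + N}" for i
        using zF that \<open>N \<in> J\<close> by (intro Phi_terms_cong) (auto simp: F_def)
      then show ?thesis unfolding Phi_eq_pcoset_sum_box[OF assms(1-3) vz] by (simp cong: sum.cong)
    qed
    then have "Phi p n g z t \<in> W" using J(2) Phi_in_Lomega[OF assms(1,2)] by blast
    then show ?thesis by simp
  qed
  moreover have "finite F" using J(1) by (simp add: F_def)
  ultimately show "\<exists>F. finite F \<and> (\<forall>z. (\<forall>i\<in>F. z i = x0 i) \<longrightarrow> z \<in> {x. Phi p n g x t \<in> W})"
    by blast
qed

lemma openin_cantor_top_Phi_cocyc: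
  assumes "height_witnesses p n g" "p > 0" "a \<in> prufer p" "b \<in> prufer p"
  shows "openin cantor_top {x. cocyc (Phi p n g x) a b \<in> S}"
proof (rule openin_cantor_topI)
  obtain v where v: "\<And>x. cocyc (Phi p n g x) a b = kappa p
      (\<Sum>i\<in>{..<v} \<times> {..<v}. Phi_terms p n g x (padd a b) i - Phi_terms p n g x a i - Phi_terms p n g x b i)"
    by (fact cocyc_Phi[OF assms])
  fix x0 assume x0: "x0 \<in> {x. cocyc (Phi p n g x) a b \<in> S}"
  have "z \<in> {x. cocyc (Phi p n g x) a b \<in> S}" if "\<forall>i\<in>{..<v} \<times> {..<v}. z i = x0 i" for z
  proof -
    have "Phi_terms p n g z t i = Phi_terms p n g x0 t i" if "i \<in> {..<v} \<times> {..<v}" for t i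
      using \<open>\<forall>i\<in>{..<v} \<times> {..<v}. z i = x0 i\<close> that by (intro Phi_terms_cong) blast
    then have "cocyc (Phi p n g z) a b = cocyc (Phi p n g x0) a b"
      unfolding v by (simp cong: sum.cong)
    then show ?thesis using x0 by simp
  qed
  then show "\<exists>F. finite F \<and> (\<forall>z. (\<forall>i\<in>F. z i = x0 i) \<longrightarrow> z \<in> {x. cocyc (Phi p n g x) a b \<in> S})"
    by (intro exI[of _ "{..<v} \<times> {..<v}"]) auto
qed

lemma continuous_map_Phi:
  assumes "height_witnesses p n g" "p > 0"
  shows "continuous_map cantor_top (Htop p) (Phi p n g :: _ \<Rightarrow> _ \<Rightarrow> _ \<Rightarrow> 'a::ab_group_add set)"
  unfolding Htop_def
proof (rule continuous_on_generated_topo)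
  fix U :: "(rat \<Rightarrow> nat \<Rightarrow> 'a set) set"
  assume "U \<in> {Hhat p}
      \<union> {{\<phi> \<in> Hhat p. \<phi> a \<in> U} |a U. a \<in> prufer p \<and> openin (Ltop p) U}
      \<union> {{\<phi> \<in> Hhat p. cocyc \<phi> a b \<in> S} |a b S. a \<in> prufer p \<and> b \<in> prufer p \<and> S \<subseteq> range (kappa p)}"
  then consider "U = Hhat p"
    | a W where "a \<in> prufer p" "openin (Ltop p) W" "U = {\<phi> \<in> Hhat p. \<phi> a \<in> W}"
    | a b S where "a \<in> prufer p" "b \<in> prufer p" "U = {\<phi> \<in> Hhat p. cocyc \<phi> a b \<in> S}"
    by blast
  then show "openin cantor_top (Phi p n g -` U \<inter> topspace cantor_top)"
  proof cases
    case 1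
    then have "Phi p n g -` U \<inter> topspace cantor_top = topspace cantor_top" using Phi_in_Hhat[OF assms] by auto
    then show ?thesis by (metis openin_topspace)
  next
    case 2
    then show ?thesis using Phi_in_Hhat[OF assms] openin_cantor_top_Phi_eval[OF assms] by (simp add: vimage_def)
  next
    case 3
    then show ?thesis using Phi_in_Hhat[OF assms] openin_cantor_top_Phi_cocyc[OF assms] by (simp add: vimage_def)
  qed
qed (use Phi_in_Hhat[OF assms] in auto)

lemma topspace_Htop: "topspace (Htop p) = Hhat p"
  unfolding Htop_def topology_generated_by_topspace by auto

lemma openin_Htop_eval:
  "t \<in> prufer p \<Longrightarrow> openin (Ltop p) U \<Longrightarrow> openin (Htop p) {\<phi> \<in> Hhat p. \<phi> t \<in> U}"
  unfolding Htop_def by (intro topology_generated_by_Basis) blast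

lemma openin_Ltop_minus_kappa: "openin (Ltop p) (Lomega p - {kappa p (a::'a::ab_group_add)})"
proof -
  have "Hausdorff_space (Ltop p :: (nat \<Rightarrow> 'a set) topology)"
    unfolding Ltop_def by (intro Hausdorff_space_subtopology) (simp add: Hausdorff_space_product_topology)
  then have "closedin (Ltop p) {kappa p a}"
    by (intro closedin_t1_singleton Hausdorff_imp_t1_space) (simp_all add: topspace_Ltop kappa_in_Lomega)
  then have "openin (Ltop p) (topspace (Ltop p) - {kappa p a})" by (rule openin_diff[OF openin_topspace])
  then show ?thesis by (simp only: topspace_Ltop)
qed

lemma eval_in_kappa_borel_sigma2:
  assumes "t \<in> prufer p"
  shows "{\<phi> \<in> Hhat p. \<phi> t \<in> range (kappa p :: 'a::{ab_group_add, countable} \<Rightarrow> _)} \<in> borel_sigma (Htop p) 2"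
proof -
  define U where "U a = {\<phi> \<in> Hhat p. \<phi> t \<in> Lomega p - {kappa p (a::'a)}}" for a
  have eq: "{\<phi> \<in> Hhat p. \<phi> t \<in> range (kappa p)} = (\<Union>i. topspace (Htop p) - U (from_nat i))"
  proof (rule set_eqI, rule iffI)
    fix \<phi> :: "rat \<Rightarrow> nat \<Rightarrow> 'a set" assume "\<phi> \<in> {\<phi> \<in> Hhat p. \<phi> t \<in> range (kappa p)}"
    then obtain a :: 'a where "\<phi> \<in> Hhat p" "\<phi> t = kappa p a" by blast
    then have "\<phi> \<in> topspace (Htop p) - U (from_nat (to_nat a))" by (simp add: U_def topspace_Htop)
    then show "\<phi> \<in> (\<Union>i. topspace (Htop p) - U (from_nat i))" by blast
  next
    fix \<phi> :: "rat \<Rightarrow> nat \<Rightarrow> 'a set" assume "\<phi> \<in> (\<Union>i. topspace (Htop p) - U (from_nat i))"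
    then obtain i where "\<phi> \<in> Hhat p" "\<phi> \<notin> U (from_nat i)" by (auto simp: topspace_Htop)
    moreover have "\<phi> t \<in> Lomega p" using \<open>\<phi> \<in> Hhat p\<close> assms by (simp add: Hhat_def)
    ultimately show "\<phi> \<in> {\<phi> \<in> Hhat p. \<phi> t \<in> range (kappa p)}" by (simp add: U_def)
  qed
  have "U (from_nat i) \<in> borel_sigma (Htop p) (Suc 0)" for i
    unfolding U_def using openin_Htop_eval[OF assms openin_Ltop_minus_kappa] by simp
  then show ?thesis unfolding eq numeral_2_eq_2 by (rule borel_sigma_Suc_SucI)
qed

lemma NH_in_borel_pi3:
  "(NH p :: (rat \<Rightarrow> nat \<Rightarrow> 'a::{ab_group_add, countable} set) set) \<in> borel_pi (Htop p) 3"
proof -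
  define T where "T = from_nat_into (prufer p)"
  define Z where "Z t = {\<phi> \<in> Hhat p. \<phi> t \<in> range (kappa p :: 'a \<Rightarrow> _)}" for t
  have ne: "prufer p \<noteq> {}" using zero_in_prufer by blast
  have T: "range T = prufer p" "\<And>j. T j \<in> prufer p"
    unfolding T_def by (simp_all add: range_from_nat_into[OF ne] countableI_type from_nat_into[OF ne])
  have "NH p = topspace (Htop p) - (\<Union>j. topspace (Htop p) - Z (T j))"
    unfolding NH_def Z_def topspace_Htop T(1)[symmetric] by auto
  moreover have "(\<Union>j. topspace (Htop p) - Z (T j)) \<in> borel_sigma (Htop p) 3"
    using eval_in_kappa_borel_sigma2[OF T(2)] unfolding Z_def numeral_3_eq_3
    by (intro borel_sigma_Suc_SucI) (simp add: numeral_2_eq_2)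
  ultimately show ?thesis unfolding borel_pi_def by blast
qed

section \<open>The lower bound: a Baire category argument\<close>

definition finite_columns_below :: "nat \<Rightarrow> (nat \<times> nat \<Rightarrow> bool) \<Rightarrow> bool" where
  "finite_columns_below M s \<longleftrightarrow> (\<forall>m<M. finite {k. s (m, k)})"

lemma agrees_below_trans:
  "agrees_below M s s' \<Longrightarrow> agrees_below M' s' s'' \<Longrightarrow> M \<le> M' \<Longrightarrow> agrees_below M s s''"
  unfolding agrees_below_def by auto

lemma agrees_below_override_on: "agrees_below M s (override_on z s {i. fst i < M})"
  by (simp add: agrees_below_def)

lemma openin_cantor_top_vimage_override_on:
  assumes "openin cantor_top S"
  shows "openin cantor_top ((\<lambda>z. override_on z s A) -` S)"
proof (rule openin_cantor_topI)
  fix z0 assume "z0 \<in> (\<lambda>z. override_on z s A) -` S"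
  then have "override_on z0 s A \<in> S" by simp
  then obtain F where F: "finite F" "\<And>z. (\<forall>i\<in>F. z i = override_on z0 s A i) \<Longrightarrow> z \<in> S"
    using openin_cantor_topD[OF assms] by blast
  have "override_on z s A \<in> S" if "\<forall>i\<in>F. z i = z0 i" for z
    using that by (intro F(2)) (simp add: override_on_def)
  then show "\<exists>F. finite F \<and> (\<forall>z. (\<forall>i\<in>F. z i = z0 i) \<longrightarrow> z \<in> (\<lambda>z. override_on z s A) -` S)"
    using F(1) by blast
qed

lemma openin_cantor_top_column_ne: "openin cantor_top {z. (\<lambda>k. z (M, k)) \<noteq> y}"
proof (rule openin_cantor_topI)
  fix z0 assume "z0 \<in> {z. (\<lambda>k. z (M, k)) \<noteq> y}"
  then obtain k where "z0 (M, k) \<noteq> y k" by auto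
  then have "\<forall>z. (\<forall>i\<in>{(M, k)}. z i = z0 i) \<longrightarrow> z \<in> {z. (\<lambda>k. z (M, k)) \<noteq> y}" by auto
  then show "\<exists>F. finite F \<and> (\<forall>z. (\<forall>i\<in>F. z i = z0 i) \<longrightarrow> z \<in> {z. (\<lambda>k. z (M, k)) \<noteq> y})" by blast
qed

lemma column_ne_meets_open:
  assumes "openin cantor_top V" "V \<noteq> {}"
  shows "{z. (\<lambda>k. z (M, k)) \<noteq> y} \<inter> V \<noteq> {}"
proof -
  obtain z0 where z0: "z0 \<in> V" using assms(2) by blast
  then obtain F where F: "finite F" "\<And>z. (\<forall>i\<in>F. z i = z0 i) \<Longrightarrow> z \<in> V"
    using openin_cantor_topD[OF assms(1)] by blast
  obtain k where "k \<notin> snd ` F" using ex_new_if_finite[OF infinite_UNIV_nat finite_imageI[OF F(1)]] by blast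
  then have k: "(M, k) \<notin> F" by force
  define z where "z = z0((M, k) := \<not> y k)"
  have "z \<in> V" using k by (intro F(2)) (auto simp: z_def)
  moreover have "z (M, k) \<noteq> y k" by (simp add: z_def)
  then have "(\<lambda>k. z (M, k)) \<noteq> y" by (auto dest: fun_cong[of _ _ k])
  ultimately show ?thesis by blast
qed

lemma override_on_meets_open:
  assumes "finite_columns_below M s"
    and meets: "\<And>M' s'. M < M' \<Longrightarrow> agrees_below M s s' \<Longrightarrow> finite_columns_below M' s'
        \<Longrightarrow> \<exists>x. agrees_below M' s' x \<and> x \<in> G"
    and "openin cantor_top V" "V \<noteq> {}"
  shows "\<exists>z\<in>V. override_on z s {i. fst i < M} \<in> G"
proof -
  obtain z0 where z0: "z0 \<in> V" using assms(4) by blast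
  then obtain F where F: "finite F" "\<And>z. (\<forall>i\<in>F. z i = z0 i) \<Longrightarrow> z \<in> V"
    using openin_cantor_topD[OF assms(3)] by blast
  obtain B where B: "fst ` F \<subseteq> {..<B}" using finite_nat_bounded[OF finite_imageI[OF F(1)]] by blast
  define M' where "M' = max (Suc M) B"
  define s' where "s' = override_on (\<lambda>i. i \<in> F \<and> z0 i) s {i. fst i < M}"
  have "finite {k. s' (m, k)}" if "m < M'" for m
  proof (cases "m < M")
    case True then show ?thesis using assms(1) by (simp add: finite_columns_below_def s'_def)
  next
    case False
    then have "{k. s' (m, k)} \<subseteq> snd ` F" by (force simp: s'_def)
    then show ?thesis using F(1) finite_subset by blast
  qed
  then have "finite_columns_below M' s'" by (simp add: finite_columns_below_def)
  moreover have "M < M'" "agrees_below M s s'" by (simp_all add: M'_def s'_def agrees_below_override_on)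
  ultimately obtain x where x: "agrees_below M' s' x" "x \<in> G" using meets by blast
  define z where "z = override_on x z0 {i. fst i < M}"
  have "fst i < M'" if "i \<in> F" for i using B that by (force simp: M'_def)
  then have "z \<in> V" using x(1) by (intro F(2)) (auto simp: z_def s'_def agrees_below_def override_on_def)
  moreover have "override_on z s {i. fst i < M} = x"
    using x(1) \<open>M < M'\<close> by (auto simp: z_def s'_def agrees_below_def override_on_def fun_eq_iff)
  ultimately show ?thesis using x(2) by auto
qed

lemma Baire_override_on_Gdelta:
  fixes U :: "nat \<Rightarrow> (nat \<times> nat \<Rightarrow> bool) set" and K :: "(nat \<Rightarrow> bool) set"
  assumes U: "\<And>i. openin cantor_top (U i)" and "countable K" "finite_columns_below M s"
    and meets: "\<And>M' s'. M < M' \<Longrightarrow> agrees_below M s s' \<Longrightarrow> finite_columns_below M' s'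
      \<Longrightarrow> \<exists>x. agrees_below M' s' x \<and> x \<in> (\<Inter>i. U i)"
  shows "\<exists>z. override_on z s {i. fst i < M} \<in> (\<Inter>i. U i) \<and> (\<lambda>k. z (M, k)) \<notin> K"
proof -
  define \<psi> where "\<psi> = (\<lambda>z. override_on z s {i. fst i < M})"
  define W where "W y = {z :: nat \<times> nat \<Rightarrow> bool. (\<lambda>k. z (M, k)) \<noteq> y}" for y
  have "\<Inter>(range (\<lambda>i. \<psi> -` U i) \<union> W ` K) \<noteq> {}"
  proof (rule cantor_top_Baire)
    show "countable (range (\<lambda>i. \<psi> -` U i) \<union> W ` K)"
      using \<open>countable K\<close> by (intro countable_Un countable_image) simp_all
    show "openin cantor_top T" if "T \<in> range (\<lambda>i. \<psi> -` U i) \<union> W ` K" for T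
    proof -
      from that consider i where "T = \<psi> -` U i" | y where "T = W y" by blast
      then show ?thesis
        using openin_cantor_top_vimage_override_on[OF U] openin_cantor_top_column_ne
        by cases (simp_all add: \<psi>_def W_def)
    qed
    show "T \<inter> V \<noteq> {}"
      if T: "T \<in> range (\<lambda>i. \<psi> -` U i) \<union> W ` K" and V: "openin cantor_top V" "V \<noteq> {}" for T V
    proof -
      from T consider i where "T = \<psi> -` U i" | y where "T = W y" by blast
      then show ?thesis
      proof cases
        case 1
        obtain z where "z \<in> V" "\<psi> z \<in> (\<Inter>i. U i)"
          using override_on_meets_open[OF assms(3) meets V] unfolding \<psi>_def by blast
        then show ?thesis using 1 by blast
      next
        case 2
        then show ?thesis using column_ne_meets_open[OF V] by (simp add: W_def)
      qed
    qed
  qed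
  then obtain z where z: "z \<in> \<Inter>(range (\<lambda>i. \<psi> -` U i) \<union> W ` K)" by (meson ex_in_conv)
  have "\<psi> z \<in> U i" for i using InterD[OF z, of "\<psi> -` U i"] by simp
  moreover have "(\<lambda>k. z (M, k)) \<notin> K" using InterD[OF z, of "W (\<lambda>k. z (M, k))"] by (auto simp: W_def)
  ultimately show ?thesis unfolding \<psi>_def by blast
qed

lemma avoid_Gdelta:
  fixes U :: "nat \<Rightarrow> (nat \<times> nat \<Rightarrow> bool) set"
  assumes U: "\<And>i. openin cantor_top (U i)" "(\<Inter>i. U i) \<subseteq> P"
    and sections: "countable {(\<lambda>k. x (M, k)) | x. agrees_below M s x \<and> x \<in> P}"
    and "finite_columns_below M s"
  shows "\<exists>M' s'. M < M' \<and> agrees_below M s s' \<and> finite_columns_below M' s'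
      \<and> (\<forall>x. agrees_below M' s' x \<longrightarrow> x \<notin> (\<Inter>i. U i))"
proof (rule ccontr)
  assume "\<not> ?thesis"
  then have "\<And>M' s'. M < M' \<Longrightarrow> agrees_below M s s' \<Longrightarrow> finite_columns_below M' s'
      \<Longrightarrow> \<exists>x. agrees_below M' s' x \<and> x \<in> (\<Inter>i. U i)"
    by blast
  from Baire_override_on_Gdelta[OF U(1) sections assms(4) this]
  obtain z where z: "override_on z s {i. fst i < M} \<in> (\<Inter>i. U i)"
    "(\<lambda>k. z (M, k)) \<notin> {(\<lambda>k. x (M, k)) | x. agrees_below M s x \<and> x \<in> P}"
    by blast
  have "override_on z s {i. fst i < M} \<in> P" using z(1) U(2) by (rule subsetD[rotated])
  then show False
    using z(2) agrees_below_override_on[of M s z] by (auto simp: override_on_def)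
qed

lemma agrees_below_chain:
  assumes "\<And>j. Ms j < Ms (Suc j)" "\<And>j. agrees_below (Ms j) (ss j) (ss (Suc j))" "j \<le> j'"
  shows "agrees_below (Ms j) (ss j) (ss j')"
  using assms(3)
proof (induction j' rule: dec_induct)
  case (step j')
  have "strict_mono Ms" using assms(1) by (simp add: strict_mono_Suc_iff)
  then have "Ms j \<le> Ms j'" using step.hyps(1) by (simp add: strict_mono_less_eq)
  then show ?case by (rule agrees_below_trans[OF step.IH assms(2)])
qed (simp add: agrees_below_def)

lemma agrees_below_chain_limit:
  assumes "\<And>j. Ms j < Ms (Suc j)" "\<And>j. agrees_below (Ms j) (ss j) (ss (Suc j))"
  shows "agrees_below (Ms j) (ss j) (\<lambda>(m, k). ss (Suc m) (m, k))"
  unfolding agrees_below_def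
proof (intro allI impI)
  fix m k assume "m < Ms j"
  have "strict_mono Ms" using assms(1) by (simp add: strict_mono_Suc_iff)
  then have "m < Ms (Suc m)" using strict_mono_imp_increasing[of Ms "Suc m"] by simp
  then show "(\<lambda>(m, k). ss (Suc m) (m, k)) (m, k) = ss j (m, k)"
    using agrees_below_chain[where Ms=Ms and ss=ss, OF assms, of j "Suc m"]
      agrees_below_chain[where Ms=Ms and ss=ss, OF assms, of "Suc m" j] \<open>m < Ms j\<close>
    by (cases "j \<le> Suc m") (auto simp: agrees_below_def)
qed

lemma finite_columns_fusion:
  fixes Q :: "nat \<Rightarrow> nat \<Rightarrow> (nat \<times> nat \<Rightarrow> bool) \<Rightarrow> bool"
  assumes step: "\<And>j M s. finite_columns_below M s
      \<Longrightarrow> \<exists>M' s'. M < M' \<and> agrees_below M s s' \<and> finite_columns_below M' s' \<and> Q j M' s'"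
  shows "\<exists>x. (\<forall>m. finite {k. x (m, k)}) \<and> (\<forall>j. \<exists>M s. agrees_below M s x \<and> Q j M s)"
proof -
  define R where "R j q q' \<longleftrightarrow> fst q < fst q' \<and> agrees_below (fst q) (snd q) (snd q')
      \<and> finite_columns_below (fst q') (snd q') \<and> Q j (fst q') (snd q')" for j q q'
  define st where "st = rec_nat (0, \<lambda>_. False) (\<lambda>j q. SOME q'. R j q q')"
  define Ms where "Ms j = fst (st j)" for j
  define ss where "ss j = snd (st j)" for j
  have R: "R j (st j) (st (Suc j))" if "finite_columns_below (Ms j) (ss j)" for j
  proof -
    have "\<exists>q'. R j (st j) q'" using step[OF that, of j] by (force simp: R_def Ms_def ss_def)
    then show ?thesis by (simp add: st_def someI_ex)
  qed
  have fin: "finite_columns_below (Ms j) (ss j)" for j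
  proof (induction j)
    case 0 then show ?case by (simp add: Ms_def ss_def st_def finite_columns_below_def)
  next
    case (Suc j) then show ?case using R[OF Suc] by (simp add: R_def Ms_def ss_def)
  qed
  have chain: "Ms j < Ms (Suc j)" "agrees_below (Ms j) (ss j) (ss (Suc j))"
      "Q j (Ms (Suc j)) (ss (Suc j))" for j
    using R[OF fin] by (simp_all add: R_def Ms_def ss_def)
  define x where "x = (\<lambda>(m, k). ss (Suc m) (m, k))"
  have agrees: "agrees_below (Ms j) (ss j) x" for j
    unfolding x_def by (rule agrees_below_chain_limit[where Ms=Ms and ss=ss, OF chain(1,2)])
  have "finite {k. x (m, k)}" for m
  proof -
    have "strict_mono Ms" using chain(1) by (simp add: strict_mono_Suc_iff)
    then have "m < Ms (Suc m)" using strict_mono_imp_increasing[of Ms "Suc m"] by simp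
    then show ?thesis using fin[of "Suc m"] by (simp add: x_def finite_columns_below_def)
  qed
  moreover have "\<exists>M s. agrees_below M s x \<and> Q j M s" for j
    using agrees chain(3) by blast
  ultimately show ?thesis by blast
qed

lemma not_borel_sigma3_if_finite_columns:
  assumes fin: "\<And>x. (\<And>m. finite {k. x (m, k)}) \<Longrightarrow> x \<in> P"
    and sections: "\<And>M s. countable {(\<lambda>k. x (M, k)) | x. agrees_below M s x \<and> x \<in> P}"
  shows "P \<notin> borel_sigma cantor_top 3"
proof
  assume "P \<in> borel_sigma cantor_top 3"
  then obtain U :: "nat \<Rightarrow> nat \<Rightarrow> _" where U: "\<And>j i. openin cantor_top (U j i)" "P = (\<Union>j. \<Inter>i. U j i)"
    using borel_sigma_3_imp_Union_Gdelta by blast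
  have avoid: "\<exists>M' s'. M < M' \<and> agrees_below M s s' \<and> finite_columns_below M' s'
      \<and> (\<forall>x. agrees_below M' s' x \<longrightarrow> x \<notin> (\<Inter>i. U j i))" if "finite_columns_below M s" for j M s
    by (rule avoid_Gdelta[where U="U j", OF U(1) _ sections that]) (auto simp: U(2))
  have "\<exists>x. (\<forall>m. finite {k. x (m, k)})
      \<and> (\<forall>j. \<exists>M s. agrees_below M s x \<and> (\<forall>x. agrees_below M s x \<longrightarrow> x \<notin> (\<Inter>i. U j i)))"
    by (rule finite_columns_fusion) (rule avoid)
  then obtain x where x: "\<forall>m. finite {k. x (m, k)}"
    "\<forall>j. \<exists>M s. agrees_below M s x \<and> (\<forall>x. agrees_below M s x \<longrightarrow> x \<notin> (\<Inter>i. U j i))"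
    by (elim exE conjE)
  have "x \<in> P" using x(1) by (intro fin) blast
  then obtain j where "x \<in> (\<Inter>i. U j i)" by (auto simp: U(2))
  moreover obtain M s where "agrees_below M s x" "\<forall>x. agrees_below M s x \<longrightarrow> x \<notin> (\<Inter>i. U j i)"
    using x(2) by blast
  ultimately show False by blast
qed

theorem lemma4p13:
  fixes p :: nat
  assumes "prime p"
    and "p_group p TYPE('a::{ab_group_add, countable})"
    and "reduced_group TYPE('a)"
    and "\<not> bounded_group TYPE('a)"
  shows "(NH p :: (rat \<Rightarrow> nat \<Rightarrow> 'a set) set) \<in> borel_pi (Htop p) 3
       \<and> (NH p :: (rat \<Rightarrow> nat \<Rightarrow> 'a set) set) \<notin> borel_sigma (Htop p) 3"
proof
  show "(NH p :: (rat \<Rightarrow> nat \<Rightarrow> 'a set) set) \<in> borel_pi (Htop p) 3" by (rule NH_in_borel_pi3)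
  obtain n and g :: "nat \<Rightarrow> 'a" where hw: "height_witnesses p n g"
    using height_witnesses_exist[OF assms] by blast
  have p: "p \<ge> 2" "p > 0" using prime_ge_2_nat[OF assms(1)] by simp_all
  have "{x. Phi p n g x \<in> NH p} \<notin> borel_sigma cantor_top 3"
  proof (rule not_borel_sigma3_if_finite_columns)
    show "x \<in> {x. Phi p n g x \<in> NH p}" if "\<And>m. finite {k. x (m, k)}" for x
      using Phi_in_NH_if_finite_columns[OF hw p(2) that] by simp
    show "countable {(\<lambda>k. x (M, k)) | x. agrees_below M s x \<and> x \<in> {x. Phi p n g x \<in> NH p}}" for M s
      using countable_columns_Phi_in_NH[OF hw p(1)] by simp
  qed
  then show "(NH p :: (rat \<Rightarrow> nat \<Rightarrow> 'a set) set) \<notin> borel_sigma (Htop p) 3"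
    using borel_sigma_vimage[OF continuous_map_Phi[OF hw p(2)]] by auto
qed

end
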